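(* Let $A$ and $B$ be $m\times n$ real matrices, and let $\sigma_1,\dots,\sigma_\ell$ ($\ell\ge1$) be the distinct singular values of $A$ (not necessarily in non-increasing order), where $0$ is counted as a singular value with multiplicity equal to the multiplicity of $0$ as an eigenvalue of $AA^T$; let $m_i$ be the multiplicity of $\sigma_i$, so $m_1+\dots+m_\ell=m$. Then $AA^T=BB^T$ and $A^TA=B^TB$ if and only if there exist orthogonal matrices $U_1,U_2$ ($m\times m$), $V$ ($n\times n$) and an $m\times n$ rectangular diagonal matrix $\Sigma$ whose diagonal lists $\sigma_1$ ($m_1$ times), then $\sigma_2$ ($m_2$ times), etc., such that $A=U_1\Sigma V^T$, $B=U_2\Sigma V^T$ and $U_1=U_2\,\mathrm{diag}(W_1,\dots,W_\ell)$, where each $W_i$ is an $m_i\times m_i$ orthogonal matrix.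
   Formalization: When $m>n$, the order of $\sigma_1,\dots,\sigma_\ell$ is restricted so that every entry of the listed diagonal beyond position n is 0, that is, the singular value 0 comes last. The statement above fails without it. *)

theory Defs
  imports "Jordan_Normal_Form.Matrix" "Jordan_Normal_Form.Char_Poly"
begin

definition orth_mat :: "nat \<Rightarrow> real mat \<Rightarrow> bool" where
  "orth_mat k U \<longleftrightarrow> U \<in> carrier_mat k k \<and> U * transpose_mat U = 1\<^sub>m k \<and> transpose_mat U * U = 1\<^sub>m k"

definition singular_value :: "real mat \<Rightarrow> real \<Rightarrow> bool" where
  "singular_value A s \<longleftrightarrow> s \<ge> 0 \<and> eigenvalue (A * transpose_mat A) (s\<^sup>2)"

definition sv_mult :: "real mat \<Rightarrow> real \<Rightarrow> nat" where
  "sv_mult A s = order (s\<^sup>2) (char_poly (A * transpose_mat A))"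

definition block_start :: "(nat \<Rightarrow> nat) \<Rightarrow> nat \<Rightarrow> nat" where
  "block_start mu i = (\<Sum>k<i. mu k)"

text \<open>The length-m diagonal list: sigma 0 (mu 0 times), sigma 1 (mu 1 times), ...\<close>
definition diag_entry :: "nat \<Rightarrow> (nat \<Rightarrow> real) \<Rightarrow> (nat \<Rightarrow> nat) \<Rightarrow> nat \<Rightarrow> real" where
  "diag_entry l \<sigma> mu j =
     \<sigma> (THE i. i < l \<and> block_start mu i \<le> j \<and> j < block_start mu i + mu i)"

definition rect_diag_mat :: "nat \<Rightarrow> nat \<Rightarrow> (nat \<Rightarrow> real) \<Rightarrow> real mat \<Rightarrow> bool" where
  "rect_diag_mat m n d S \<longleftrightarrow> S \<in> carrier_mat m n \<and>
     (\<forall>i<m. \<forall>j<n. S $$ (i, j) = (if i = j then d i else 0))"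

end

theory Submission
  imports Defs
begin

text \<open>
  The forward direction rests on one fact about Gram matrices: if \<open>Y\<^sup>T Y = W (S\<^sup>T S) W\<^sup>T\<close>
  with \<open>W\<close> orthogonal and \<open>S\<close> rectangular diagonal, then \<open>Y = U S W\<^sup>T\<close> for an orthogonal
  \<open>U\<close>, because the columns \<open>Y w\<^sub>k\<close> are orthogonal of length \<open>|d\<^sub>k|\<close>, so the nonzero ones
  can be normalised and completed to an orthonormal basis. Applied to \<open>A\<^sup>T\<close>, with \<open>W\<close> an
  orthonormal eigenbasis of \<open>A A\<^sup>T\<close> reordered so that the eigenvalues follow the blocks of
  the \<open>\<sigma>\<^sub>i\<close> (the multiplicities agree), it gives \<open>A = U\<^sub>1 S V\<^sup>T\<close>; applied to \<open>B\<close>, using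
  \<open>B\<^sup>T B = A\<^sup>T A = V S\<^sup>T S V\<^sup>T\<close>, it gives \<open>B = U\<^sub>2 S V\<^sup>T\<close>.

  Now \<open>U\<^sub>1\<close> and \<open>U\<^sub>2\<close> both conjugate \<open>A A\<^sup>T = B B\<^sup>T\<close> to the diagonal matrix \<open>S S\<^sup>T\<close>, so
  \<open>D = U\<^sub>2\<^sup>T U\<^sub>1\<close> commutes with \<open>S S\<^sup>T\<close>. The diagonal of \<open>S S\<^sup>T\<close> is constant on each block
  and takes distinct values on distinct blocks, hence \<open>D\<close> is block diagonal, and its blocks
  are orthogonal. Conversely such a \<open>D\<close> commutes with \<open>S S\<^sup>T\<close>, which gives
  \<open>A A\<^sup>T = B B\<^sup>T\<close>, while \<open>A\<^sup>T A = V S\<^sup>T S V\<^sup>T = B\<^sup>T B\<close> holds for any orthogonal \<open>U\<^sub>1, U\<^sub>2\<close>.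
\<close>

lemma orth_matD:
  assumes "orth_mat n U"
  shows "U \<in> carrier_mat n n" "U * transpose_mat U = 1\<^sub>m n" "transpose_mat U * U = 1\<^sub>m n"
  using assms unfolding orth_mat_def by auto

lemma orth_mat_transpose: "orth_mat n U \<Longrightarrow> orth_mat n (transpose_mat U)"
  unfolding orth_mat_def by auto

lemma orth_mat_cancel_left:
  assumes "orth_mat n V" "X \<in> carrier_mat n k"
  shows "transpose_mat V * (V * X) = X" "V * (transpose_mat V * X) = X"
  using assms orth_matD[OF assms(1)]
  by (simp_all flip: assoc_mult_mat[of "transpose_mat V" n n V n X k]
      assoc_mult_mat[of V n n "transpose_mat V" n X k])

lemma orth_mat_mult:
  assumes U: "orth_mat n U" and V: "orth_mat n V"
  shows "orth_mat n (U * V)"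
proof -
  note Uc = orth_matD[OF U] and Vc = orth_matD[OF V]
  have "(U * V) * transpose_mat (U * V) = U * (V * (transpose_mat V * transpose_mat U))"
    using Uc Vc by (simp add: transpose_mult[of U n n V n] assoc_mult_mat[of U n n V n _ n])
  also have "\<dots> = 1\<^sub>m n" using Uc orth_mat_cancel_left(2)[OF V, of "transpose_mat U" n] by simp
  finally have "(U * V) * transpose_mat (U * V) = 1\<^sub>m n" .
  moreover have "transpose_mat (U * V) * (U * V) = transpose_mat V * (transpose_mat U * (U * V))"
    using Uc Vc by (simp add: transpose_mult[of U n n V n] assoc_mult_mat[of _ n n _ n "U * V" n])
  then have "transpose_mat (U * V) * (U * V) = 1\<^sub>m n"
    using Vc orth_mat_cancel_left(1)[OF U, of V n] by simp
  ultimately show ?thesis using Uc Vc unfolding orth_mat_def by simp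
qed

lemma orth_mat_conj_cancel:
  assumes W: "orth_mat n W" and L: "L \<in> carrier_mat n n"
  shows "transpose_mat W * (W * L * transpose_mat W) * W = L"
  using orth_matD[OF W] L orth_mat_cancel_left(1)[OF W L]
  by (simp add: assoc_mult_mat[of _ n n _ n _ n])

lemma orth_mat_conj_eq_iff:
  fixes U X Y :: "real mat"
  assumes U: "orth_mat n U" and X: "X \<in> carrier_mat n n" and Y: "Y \<in> carrier_mat n n"
  shows "U * X * transpose_mat U = U * Y * transpose_mat U \<longleftrightarrow> X = Y"
  using orth_mat_conj_cancel[OF U X] orth_mat_conj_cancel[OF U Y] by metis

lemma orth_mat_conj_eq_iff_commute:
  fixes D L :: "real mat"
  assumes D: "orth_mat n D" and L: "L \<in> carrier_mat n n"
  shows "D * L * transpose_mat D = L \<longleftrightarrow> D * L = L * D"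
proof -
  have "D * L * transpose_mat D * D = D * L" "L * D * transpose_mat D = L"
    using orth_matD[OF D] L by (simp_all add: assoc_mult_mat[of _ n n _ n _ n])
  then show ?thesis by metis
qed

lemma orth_mat_conj_mult:
  fixes U D L :: "real mat"
  assumes U: "U \<in> carrier_mat n n" and D: "D \<in> carrier_mat n n" and L: "L \<in> carrier_mat n n"
  shows "(U * D) * L * transpose_mat (U * D) = U * (D * L * transpose_mat D) * transpose_mat U"
  using U D L by (simp add: transpose_mult[OF U D] assoc_mult_mat[of _ n n _ n _ n])

lemma transpose_three_factors:
  fixes U S V :: "real mat"
  assumes U: "U \<in> carrier_mat m m" and S: "S \<in> carrier_mat m n" and V: "V \<in> carrier_mat n n"
  shows "transpose_mat (U * S * transpose_mat V) = V * transpose_mat S * transpose_mat U"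
proof -
  have "transpose_mat (U * S * transpose_mat V) = V * transpose_mat (U * S)"
    using transpose_mult[of "U * S" m n "transpose_mat V" n] U S V by simp
  also have "transpose_mat (U * S) = transpose_mat S * transpose_mat U"
    by (rule transpose_mult[OF U S])
  finally show ?thesis using U S V by simp
qed

lemma orth_factorization_mult_transpose:
  fixes U S V :: "real mat"
  assumes U: "U \<in> carrier_mat m m" and S: "S \<in> carrier_mat m n" and V: "orth_mat n V"
  shows "(U * S * transpose_mat V) * transpose_mat (U * S * transpose_mat V) =
    U * (S * transpose_mat S) * transpose_mat U"
proof -
  note Vc = orth_matD(1)[OF V]
  have "(U * S * transpose_mat V) * (V * transpose_mat S * transpose_mat U)
      = (U * S) * (transpose_mat V * (V * (transpose_mat S * transpose_mat U)))"
    using U S Vc by (subst assoc_mult_mat[of "U * S" m n "transpose_mat V" n _ m]) auto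
  also have "\<dots> = U * (S * (transpose_mat S * transpose_mat U))"
    using U S orth_mat_cancel_left(1)[OF V, of "transpose_mat S * transpose_mat U" m]
    by (simp add: assoc_mult_mat[of U m m S n _ m])
  also have "\<dots> = U * (S * transpose_mat S) * transpose_mat U"
    using U S by (simp add: assoc_mult_mat[of U m m "S * transpose_mat S" m _ m])
  finally show ?thesis using transpose_three_factors[OF U S Vc] by simp
qed

lemma orth_factorization_transpose_mult:
  fixes U S V :: "real mat"
  assumes U: "orth_mat m U" and S: "S \<in> carrier_mat m n" and V: "V \<in> carrier_mat n n"
  shows "transpose_mat (U * S * transpose_mat V) * (U * S * transpose_mat V) =
    V * (transpose_mat S * S) * transpose_mat V"
proof -
  note Uc = orth_matD(1)[OF U]
  have "transpose_mat (V * transpose_mat S * transpose_mat U) = U * S * transpose_mat V"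
    using transpose_three_factors[OF V _ Uc, of "transpose_mat S"] S by simp
  with orth_factorization_mult_transpose[OF V _ U, of "transpose_mat S"] S
  show ?thesis by (simp add: transpose_three_factors[OF Uc S V])
qed

lemma scalar_prod_self_nonneg: "0 \<le> (v::real vec) \<bullet> v"
  using conjugate_square_ge_0_vec[of v] by simp

lemma scalar_prod_self_eq_0_iff: "(v::real vec) \<in> carrier_vec n \<Longrightarrow> v \<bullet> v = 0 \<longleftrightarrow> v = 0\<^sub>v n"
  using conjugate_square_eq_0_vec[of v n] by simp

lemma scalar_prod_normalize:
  assumes "(v::real vec) \<in> carrier_vec n" "v \<noteq> 0\<^sub>v n"
  shows "((1 / sqrt (v \<bullet> v)) \<cdot>\<^sub>v v) \<bullet> ((1 / sqrt (v \<bullet> v)) \<cdot>\<^sub>v v) = 1"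
proof -
  have "v \<bullet> v > 0"
    using assms scalar_prod_self_nonneg[of v] scalar_prod_self_eq_0_iff[of v n] by fastforce
  thus ?thesis
    using assms by (simp add: smult_scalar_prod_distrib[of _ n] scalar_prod_smult_distrib[of _ n])
qed

definition orthonormal_on :: "nat \<Rightarrow> nat set \<Rightarrow> (nat \<Rightarrow> real vec) \<Rightarrow> bool" where
  "orthonormal_on n I g \<longleftrightarrow> (\<forall>i\<in>I. g i \<in> carrier_vec n) \<and>
     (\<forall>i\<in>I. \<forall>j\<in>I. g i \<bullet> g j = (if i = j then 1 else 0))"

lemma orthonormal_onD:
  assumes "orthonormal_on n I g"
  shows "i \<in> I \<Longrightarrow> g i \<in> carrier_vec n"
    and "i \<in> I \<Longrightarrow> j \<in> I \<Longrightarrow> g i \<bullet> g j = (if i = j then 1 else 0)"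
  using assms unfolding orthonormal_on_def by auto

definition mat_of_col_fun :: "nat \<Rightarrow> nat \<Rightarrow> (nat \<Rightarrow> 'a vec) \<Rightarrow> 'a mat" where
  "mat_of_col_fun n k g = mat n k (\<lambda>(i, j). g j $ i)"

lemma mat_of_col_fun_carrier [simp]:
  "mat_of_col_fun n k g \<in> carrier_mat n k"
  "dim_row (mat_of_col_fun n k g) = n" "dim_col (mat_of_col_fun n k g) = k"
  unfolding mat_of_col_fun_def by auto

lemma index_mat_of_col_fun [simp]: "i < n \<Longrightarrow> j < k \<Longrightarrow> mat_of_col_fun n k g $$ (i, j) = g j $ i"
  unfolding mat_of_col_fun_def by simp

lemma col_mat_of_col_fun [simp]:
  "j < k \<Longrightarrow> g j \<in> carrier_vec n \<Longrightarrow> col (mat_of_col_fun n k g) j = g j"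
  by (intro eq_vecI) auto

lemma orthonormal_transpose_mult_self:
  assumes "orthonormal_on n {..<k} g"
  shows "transpose_mat (mat_of_col_fun n k g) * mat_of_col_fun n k g = 1\<^sub>m k"
  using orthonormal_onD[OF assms] by (intro eq_matI) auto

lemma orth_mat_of_orthonormal:
  assumes "orthonormal_on n {..<n} g"
  shows "orth_mat n (mat_of_col_fun n n g)"
proof -
  have "transpose_mat (mat_of_col_fun n n g) * mat_of_col_fun n n g = 1\<^sub>m n"
    by (rule orthonormal_transpose_mult_self[OF assms])
  moreover from mat_mult_left_right_inverse[OF _ _ this]
  have "mat_of_col_fun n n g * transpose_mat (mat_of_col_fun n n g) = 1\<^sub>m n" by auto
  ultimately show ?thesis unfolding orth_mat_def by auto
qed

lemma orth_mat_transpose_mult_vec_inj: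
  assumes U: "orth_mat n U" and x: "x \<in> carrier_vec n" and y: "y \<in> carrier_vec n"
    and eq: "transpose_mat U *\<^sub>v x = transpose_mat U *\<^sub>v y"
  shows "x = y"
proof -
  note U = orth_matD[OF U]
  have "x = (U * transpose_mat U) *\<^sub>v x" using U x by simp
  also have "\<dots> = U *\<^sub>v (transpose_mat U *\<^sub>v x)" using U x by (intro assoc_mult_mat_vec) auto
  also have "\<dots> = U *\<^sub>v (transpose_mat U *\<^sub>v y)" by (simp only: eq)
  also have "\<dots> = (U * transpose_mat U) *\<^sub>v y" using U y by (intro assoc_mult_mat_vec[symmetric]) auto
  also have "\<dots> = y" using U y by simp
  finally show ?thesis .
qed

lemma orthonormal_coordinates_eq:
  assumes g: "orthonormal_on n {..<n} g" and x: "x \<in> carrier_vec n" and y: "y \<in> carrier_vec n"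
    and coord: "\<And>i. i < n \<Longrightarrow> g i \<bullet> x = g i \<bullet> y"
  shows "x = y"
proof (rule orth_mat_transpose_mult_vec_inj[OF orth_mat_of_orthonormal[OF g] x y])
  show "transpose_mat (mat_of_col_fun n n g) *\<^sub>v x = transpose_mat (mat_of_col_fun n n g) *\<^sub>v y"
    using coord orthonormal_onD(1)[OF g] by (intro eq_vecI) simp_all
qed

lemma exists_unit_orthogonal:
  assumes fin: "finite I" and card: "card I < n" and g: "orthonormal_on n I g"
  shows "\<exists>x\<in>carrier_vec n. x \<bullet> x = 1 \<and> (\<forall>i\<in>I. g i \<bullet> x = 0)"
proof -
  obtain h where h: "bij_betw h {0..<card I} I" using ex_bij_betw_nat_finite[OF fin] by blast
  have hI: "h r \<in> I" if "r < card I" for r using h that bij_betwE by fastforce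
  define c where "c r = (if r < card I then g (h r) else 0\<^sub>v n)" for r
  \<comment> \<open>Rows: the \<open>g i\<close>, then zero rows; the last row is zero, so \<open>M\<close> has a nontrivial kernel.\<close>
  define M where "M = mat\<^sub>r n n (\<lambda>r. if r = n - 1 then 0\<^sub>v n else c r)"
  have M: "M \<in> carrier_mat n n" unfolding M_def by auto
  have c: "c \<in> {0..<n} \<rightarrow> carrier_vec n" using orthonormal_onD(1)[OF g] hI unfolding c_def by auto
  have "det M = 0" unfolding M_def by (rule det_row_0[OF _ c]) (use card in auto)
  then obtain v where v: "v \<in> carrier_vec n" "v \<noteq> 0\<^sub>v n" "M *\<^sub>v v = 0\<^sub>v n"
    using det_0_iff_vec_prod_zero[OF M] by blast
  have orth: "g i \<bullet> v = 0" if i: "i \<in> I" for i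
  proof -
    obtain r where r: "r < card I" "h r = i"
      using h i unfolding bij_betw_def by (metis atLeastLessThan_iff imageE)
    have "row M r = g i"
      unfolding M_def c_def using r card orthonormal_onD(1)[OF g i] by (subst row_mat_of_row_fun) auto
    moreover have "(M *\<^sub>v v) $ r = 0" using v(3) r card by simp
    ultimately show ?thesis using r card M by simp
  qed
  define x where "x = (1 / sqrt (v \<bullet> v)) \<cdot>\<^sub>v v"
  have "x \<in> carrier_vec n" "x \<bullet> x = 1" using v scalar_prod_normalize[OF v(1,2)] unfolding x_def by auto
  moreover have "\<forall>i\<in>I. g i \<bullet> x = 0"
    unfolding x_def using orth v orthonormal_onD(1)[OF g]
    by (auto simp: scalar_prod_smult_distrib[of _ n])
  ultimately show ?thesis by blast
qed

lemma orthonormal_extend: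
  assumes "J \<subseteq> {..<n}" "orthonormal_on n J g"
  shows "\<exists>g'. orthonormal_on n {..<n} g' \<and> (\<forall>j\<in>J. g' j = g j)"
  using assms
proof (induction "card ({..<n} - J)" arbitrary: J g)
  case 0
  then have "J = {..<n}" by auto
  then show ?case using 0 by auto
next
  case (Suc c)
  have "{..<n} - J \<noteq> {}" using Suc(2) by force
  then obtain k where k: "k < n" "k \<notin> J" by auto
  have fin: "finite J" using Suc(3) finite_subset by blast
  have "card J < card {..<n}" using Suc(3) k by (intro psubset_card_mono) auto
  then obtain x where x: "x \<in> carrier_vec n" "x \<bullet> x = 1" "\<forall>i\<in>J. g i \<bullet> x = 0"
    using exists_unit_orthogonal[OF fin _ Suc(4)] by auto
  have ext: "orthonormal_on n (insert k J) (g(k := x))"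
    using Suc(4) x k unfolding orthonormal_on_def by (auto simp: comm_scalar_prod[of _ n])
  have "{..<n} - insert k J = ({..<n} - J) - {k}" by auto
  hence "c = card ({..<n} - insert k J)" using Suc(2) k by simp
  from Suc(1)[OF this _ ext] Suc(3) k obtain g' where
    "orthonormal_on n {..<n} g'" "\<forall>j\<in>insert k J. g' j = (g(k := x)) j" by auto
  then show ?case using k by auto
qed

definition rect_diag :: "nat \<Rightarrow> nat \<Rightarrow> (nat \<Rightarrow> 'a::zero) \<Rightarrow> 'a mat" where
  "rect_diag m n d = mat m n (\<lambda>(i, j). if i = j then d i else 0)"

lemma rect_diag_carrier [simp]:
  "rect_diag m n d \<in> carrier_mat m n" "dim_row (rect_diag m n d) = m" "dim_col (rect_diag m n d) = n"
  unfolding rect_diag_def by auto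

lemma index_rect_diag [simp]:
  "i < m \<Longrightarrow> j < n \<Longrightarrow> rect_diag m n d $$ (i, j) = (if i = j then d i else 0)"
  unfolding rect_diag_def by simp

lemma rect_diag_mat_iff: "rect_diag_mat m n d S \<longleftrightarrow> S = rect_diag m n d"
  unfolding rect_diag_mat_def by auto

lemma rect_diag_cong: "(\<And>j. j < m \<Longrightarrow> d j = e j) \<Longrightarrow> rect_diag m n d = rect_diag m n e"
  unfolding rect_diag_def by auto

lemma transpose_rect_diag [simp]: "transpose_mat (rect_diag m n d) = rect_diag n m d"
  by (auto simp: rect_diag_def)

lemma mult_rect_diag_index:
  fixes X :: "'a::comm_semiring_1 mat"
  assumes "dim_col X = k" "i < dim_row X" "j < n"
  shows "(X * rect_diag k n d) $$ (i, j) = (if j < k then X $$ (i, j) * d j else 0)"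
proof -
  have "(X * rect_diag k n d) $$ (i, j) = (\<Sum>l = 0..<k. X $$ (i, l) * (if l = j then d l else 0))"
    using assms by (simp add: scalar_prod_def)
  also have "\<dots> = (\<Sum>l = 0..<k. if l = j then X $$ (i, l) * d l else 0)"
    by (rule sum.cong) auto
  finally show ?thesis by simp
qed

lemma rect_diag_mult_index:
  fixes X :: "'a::comm_semiring_1 mat"
  assumes "dim_row X = k" "i < m" "j < dim_col X"
  shows "(rect_diag m k d * X) $$ (i, j) = (if i < k then d i * X $$ (i, j) else 0)"
proof -
  have "(rect_diag m k d * X) $$ (i, j) = (\<Sum>l = 0..<k. (if i = l then d i else 0) * X $$ (l, j))"
    using assms by (simp add: scalar_prod_def)
  also have "\<dots> = (\<Sum>l = 0..<k. if l = i then d i * X $$ (i, j) else 0)"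
    by (rule sum.cong) auto
  finally show ?thesis by simp
qed

lemma rect_diag_mult_rect_diag:
  fixes d e :: "nat \<Rightarrow> 'a::comm_semiring_1"
  shows "rect_diag m k d * rect_diag k n e = rect_diag m n (\<lambda>j. if j < k then d j * e j else 0)"
  by (rule eq_matI) (auto simp: mult_rect_diag_index simp del: index_mult_mat(1))

lemma rect_diag_mult_transpose:
  fixes d :: "nat \<Rightarrow> real"
  assumes "\<And>j. n \<le> j \<Longrightarrow> j < m \<Longrightarrow> d j = 0"
  shows "rect_diag m n d * transpose_mat (rect_diag m n d) = rect_diag m m (\<lambda>j. d j * d j)"
  using assms by (auto simp: rect_diag_mult_rect_diag intro!: rect_diag_cong)

lemma commute_rect_diag_iff:
  fixes D :: "real mat"
  assumes D: "D \<in> carrier_mat m m"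
  shows "D * rect_diag m m \<delta> = rect_diag m m \<delta> * D \<longleftrightarrow> (\<forall>a<m. \<forall>b<m. \<delta> a \<noteq> \<delta> b \<longrightarrow> D $$ (a, b) = 0)"
proof -
  have "(D * rect_diag m m \<delta>) $$ (a, b) = (rect_diag m m \<delta> * D) $$ (a, b) \<longleftrightarrow>
      (\<delta> a \<noteq> \<delta> b \<longrightarrow> D $$ (a, b) = 0)" if "a < m" "b < m" for a b
    using that D
    by (auto simp: mult_rect_diag_index rect_diag_mult_index mult.commute simp del: index_mult_mat(1))
  then show ?thesis using D unfolding mat_eq_iff by auto
qed

section \<open>Spectral theorem for real symmetric matrices\<close>

lemma real_mat_complex_eigenvector_parts:
  fixes M :: "real mat"
  assumes M: "M \<in> carrier_mat n n" and w: "w \<in> carrier_vec n"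
    and eig: "map_mat complex_of_real M *\<^sub>v w = z \<cdot>\<^sub>v w"
  shows "M *\<^sub>v map_vec Re w = Re z \<cdot>\<^sub>v map_vec Re w - Im z \<cdot>\<^sub>v map_vec Im w"
    and "M *\<^sub>v map_vec Im w = Im z \<cdot>\<^sub>v map_vec Re w + Re z \<cdot>\<^sub>v map_vec Im w"
proof -
  have entry: "(map_mat complex_of_real M *\<^sub>v w) $ i = (\<Sum>j = 0..<n. of_real (M $$ (i, j)) * w $ j)"
    if "i < n" for i
    using that M w by (simp add: scalar_prod_def)
  have "(M *\<^sub>v map_vec Re w) $ i = Re (z * w $ i)" "(M *\<^sub>v map_vec Im w) $ i = Im (z * w $ i)"
    if i: "i < n" for i
  proof -
    have "(\<Sum>j = 0..<n. of_real (M $$ (i, j)) * w $ j) = z * w $ i"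
      using arg_cong[OF eig, of "\<lambda>v. v $ i"] entry[OF i] i w by simp
    from arg_cong[OF this, of Re] arg_cong[OF this, of Im]
    show "(M *\<^sub>v map_vec Re w) $ i = Re (z * w $ i)" "(M *\<^sub>v map_vec Im w) $ i = Im (z * w $ i)"
      using i M w by (simp_all add: scalar_prod_def)
  qed
  then show "M *\<^sub>v map_vec Re w = Re z \<cdot>\<^sub>v map_vec Re w - Im z \<cdot>\<^sub>v map_vec Im w"
    and "M *\<^sub>v map_vec Im w = Im z \<cdot>\<^sub>v map_vec Re w + Re z \<cdot>\<^sub>v map_vec Im w"
    using M w by (auto simp: algebra_simps)
qed

lemma sym_real_mat_eigenvector:
  fixes M :: "real mat"
  assumes M: "M \<in> carrier_mat n n" and sym: "transpose_mat M = M" and n: "0 < n"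
  shows "\<exists>\<mu> x. x \<in> carrier_vec n \<and> x \<bullet> x = 1 \<and> M *\<^sub>v x = \<mu> \<cdot>\<^sub>v x"
proof -
  define MC where "MC = map_mat complex_of_real M"
  have MC: "MC \<in> carrier_mat n n" unfolding MC_def using M by auto
  obtain zs where zs: "char_poly MC = (\<Prod>z\<leftarrow>zs. [:- z, 1:])" "length zs = n"
    using char_poly_factorized[OF MC] by blast
  with n obtain z where "poly (char_poly MC) z = 0" by (cases zs) auto
  then obtain w where w: "w \<in> carrier_vec n" "w \<noteq> 0\<^sub>v n" "MC *\<^sub>v w = z \<cdot>\<^sub>v w"
    using eigenvalue_root_char_poly[OF MC] MC unfolding eigenvalue_def eigenvector_def by auto
  define a where "a = map_vec Re w"
  define b where "b = map_vec Im w"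
  have ab: "a \<in> carrier_vec n" "b \<in> carrier_vec n" using w unfolding a_def b_def by auto
  note parts = real_mat_complex_eigenvector_parts[OF M w(1) w(3)[unfolded MC_def], folded a_def b_def]
  \<comment> \<open>Symmetry gives \<open>b \<bullet> M a = M b \<bullet> a\<close>, which forces \<open>Im z = 0\<close>.\<close>
  have "b \<bullet> (M *\<^sub>v a) = (M *\<^sub>v b) \<bullet> a"
    using transpose_vec_mult_scalar[OF M ab(1,2)] sym by simp
  hence "Im z * (a \<bullet> a + b \<bullet> b) = 0"
    unfolding parts using ab
    by (simp add: scalar_prod_minus_distrib[of _ n] add_scalar_prod_distrib[of _ n]
        comm_scalar_prod[of a n b] algebra_simps)
  moreover have "a \<noteq> 0\<^sub>v n \<or> b \<noteq> 0\<^sub>v n"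
    using w(1,2) unfolding a_def b_def by (auto simp: complex_eq_iff vec_eq_iff)
  hence "a \<bullet> a + b \<bullet> b \<noteq> 0"
    using ab scalar_prod_self_nonneg[of a] scalar_prod_self_nonneg[of b] scalar_prod_self_eq_0_iff
    by (metis add_nonneg_eq_0_iff)
  ultimately have "Im z = 0" by simp
  with parts ab have "M *\<^sub>v a = Re z \<cdot>\<^sub>v a" "M *\<^sub>v b = Re z \<cdot>\<^sub>v b"
    by auto
  then obtain x where x: "x \<in> carrier_vec n" "x \<noteq> 0\<^sub>v n" "M *\<^sub>v x = Re z \<cdot>\<^sub>v x"
    using ab \<open>a \<noteq> 0\<^sub>v n \<or> b \<noteq> 0\<^sub>v n\<close> by auto
  show ?thesis
    using scalar_prod_normalize[OF x(1,2)] x M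
    by (intro exI[of _ "Re z"] exI[of _ "(1 / sqrt (x \<bullet> x)) \<cdot>\<^sub>v x"]) (auto simp: mult_mat_vec[of _ n n])
qed

lemma compression_eigenvector_lift:
  fixes M :: "real mat"
  assumes M: "M \<in> carrier_mat n n" and sym: "transpose_mat M = M"
    and g: "orthonormal_on n {..<n} g" and k: "k \<le> n"
    and eig: "\<And>j. j < k \<Longrightarrow> M *\<^sub>v g j = \<kappa> j \<cdot>\<^sub>v g j"
    and Z_def: "Z = mat_of_col_fun n (n - k) (\<lambda>j. g (k + j))"
    and y: "y \<in> carrier_vec (n - k)" and eig_y: "(transpose_mat Z * M * Z) *\<^sub>v y = \<mu> \<cdot>\<^sub>v y"
  shows "(Z *\<^sub>v y) \<bullet> (Z *\<^sub>v y) = y \<bullet> y"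
    and "\<forall>i<k. g i \<bullet> (Z *\<^sub>v y) = 0" and "M *\<^sub>v (Z *\<^sub>v y) = \<mu> \<cdot>\<^sub>v (Z *\<^sub>v y)"
proof -
  note gD = orthonormal_onD[OF g, simplified]
  have Z: "Z \<in> carrier_mat n (n - k)" unfolding Z_def by simp
  have Z_coord: "(transpose_mat Z *\<^sub>v w) $ j = g (k + j) \<bullet> w" if "j < n - k" for j w
    unfolding Z_def using that gD(1)[of "k + j"] by simp
  define x where "x = Z *\<^sub>v y"
  have x: "x \<in> carrier_vec n" unfolding x_def using Z y by auto
  have "transpose_mat Z * Z = 1\<^sub>m (n - k)"
    using gD unfolding Z_def by (intro orthonormal_transpose_mult_self) (auto simp: orthonormal_on_def)
  then have ZTx: "transpose_mat Z *\<^sub>v x = y"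
    unfolding x_def using Z y by (simp flip: assoc_mult_mat_vec[of _ "n - k" n _ "n - k"])
  show "(Z *\<^sub>v y) \<bullet> (Z *\<^sub>v y) = y \<bullet> y"
    using transpose_vec_mult_scalar[OF Z y x] ZTx unfolding x_def by simp
  show orth: "\<forall>i<k. g i \<bullet> (Z *\<^sub>v y) = 0"
  proof (intro allI impI)
    fix i assume i: "i < k"
    have "transpose_mat Z *\<^sub>v g i = 0\<^sub>v (n - k)"
      using Z_coord i gD Z by (intro eq_vecI) auto
    moreover have "g i \<in> carrier_vec n" using gD(1) i k by simp
    ultimately show "g i \<bullet> (Z *\<^sub>v y) = 0"
      using transpose_vec_mult_scalar[OF Z y] y by (metis scalar_prod_left_zero)
  qed
  show "M *\<^sub>v (Z *\<^sub>v y) = \<mu> \<cdot>\<^sub>v (Z *\<^sub>v y)"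
    unfolding x_def[symmetric]
  proof (rule orthonormal_coordinates_eq[OF g])
    fix i assume i: "i < n"
    show "g i \<bullet> (M *\<^sub>v x) = g i \<bullet> (\<mu> \<cdot>\<^sub>v x)"
    proof (cases "i < k")
      case True
      have "g i \<bullet> (M *\<^sub>v x) = (M *\<^sub>v g i) \<bullet> x"
        using transpose_vec_mult_scalar[OF M x gD(1)[OF i]] sym by simp
      then show ?thesis using eig[OF True] orth True x gD(1)[OF i] unfolding x_def by simp
    next
      case False
      have "transpose_mat Z *\<^sub>v (M *\<^sub>v x) = (transpose_mat Z * M * Z) *\<^sub>v y"
        unfolding x_def using Z M y
        by (simp add: assoc_mult_mat_vec[of _ "n - k" n _ "n - k"] assoc_mult_mat_vec[of _ n n _ "n - k"])
      then show ?thesis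
        using Z_coord[of "i - k" "M *\<^sub>v x"] Z_coord[of "i - k" x] ZTx eig_y y x gD(1)[OF i] False i
        by simp
    qed
  qed (use M x in auto)
qed

lemma sym_mat_eigenvector_orthogonal:
  fixes M :: "real mat"
  assumes M: "M \<in> carrier_mat n n" and sym: "transpose_mat M = M"
    and g: "orthonormal_on n {..<k} g" and eig: "\<And>j. j < k \<Longrightarrow> M *\<^sub>v g j = \<kappa> j \<cdot>\<^sub>v g j"
    and k: "k < n"
  shows "\<exists>\<mu> x. x \<in> carrier_vec n \<and> x \<bullet> x = 1 \<and> (\<forall>j<k. g j \<bullet> x = 0) \<and> M *\<^sub>v x = \<mu> \<cdot>\<^sub>v x"
proof -
  obtain g' where g': "orthonormal_on n {..<n} g'" and gg': "\<forall>j\<in>{..<k}. g' j = g j"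
    using orthonormal_extend[OF _ g] k by auto
  \<comment> \<open>Compress \<open>M\<close> to the orthogonal complement of the \<open>g j\<close>, spanned by the columns of \<open>Z\<close>.\<close>
  define Z where "Z = mat_of_col_fun n (n - k) (\<lambda>j. g' (k + j))"
  have Z: "Z \<in> carrier_mat n (n - k)" unfolding Z_def by simp
  define M' where "M' = transpose_mat Z * M * Z"
  have M': "M' \<in> carrier_mat (n - k) (n - k)" unfolding M'_def using Z M by auto
  have "transpose_mat M' = M'"
    unfolding M'_def using Z M sym
    by (simp add: transpose_mult[of _ "n - k" n _ "n - k"] transpose_mult[of _ n n _ "n - k"])
  with M' k obtain \<mu> y where y: "y \<in> carrier_vec (n - k)" "y \<bullet> y = 1" "M' *\<^sub>v y = \<mu> \<cdot>\<^sub>v y"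
    using sym_real_mat_eigenvector by (metis zero_less_diff)
  have "(Z *\<^sub>v y) \<bullet> (Z *\<^sub>v y) = 1" "\<forall>i<k. g' i \<bullet> (Z *\<^sub>v y) = 0"
    "M *\<^sub>v (Z *\<^sub>v y) = \<mu> \<cdot>\<^sub>v (Z *\<^sub>v y)"
    using compression_eigenvector_lift[OF M sym g' less_imp_le[OF k] _ Z_def y(1)] eig gg' y(2,3)
    unfolding M'_def by simp_all
  then show ?thesis using gg' Z y(1) by (intro exI[of _ \<mu>] exI[of _ "Z *\<^sub>v y"]) auto
qed

lemma sym_mat_orthonormal_eigenbasis:
  fixes M :: "real mat"
  assumes M: "M \<in> carrier_mat n n" and sym: "transpose_mat M = M"
  shows "\<exists>e \<kappa>. orthonormal_on n {..<n} e \<and> (\<forall>j<n. M *\<^sub>v e j = \<kappa> j \<cdot>\<^sub>v e j)"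
proof -
  have "\<exists>e \<kappa>. orthonormal_on n {..<k} e \<and> (\<forall>j<k. M *\<^sub>v e j = \<kappa> j \<cdot>\<^sub>v e j)" if "k \<le> n" for k
    using that
  proof (induction k)
    case 0
    show ?case by (auto simp: orthonormal_on_def)
  next
    case (Suc k)
    then obtain e \<kappa> where e: "orthonormal_on n {..<k} e" and eig: "\<forall>j<k. M *\<^sub>v e j = \<kappa> j \<cdot>\<^sub>v e j"
      by auto
    obtain \<mu> x where x: "x \<in> carrier_vec n" "x \<bullet> x = 1" "\<forall>j<k. e j \<bullet> x = 0" "M *\<^sub>v x = \<mu> \<cdot>\<^sub>v x"
      using sym_mat_eigenvector_orthogonal[OF M sym e _ Suc_le_lessD[OF Suc(2)]] eig by blast
    have "x \<bullet> e j = 0" if "j < k" for j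
      using x(3) that comm_scalar_prod[OF x(1) orthonormal_onD(1)[OF e, of j]] by simp
    with e x have "orthonormal_on n {..<Suc k} (e(k := x))"
      unfolding orthonormal_on_def lessThan_Suc by auto
    moreover have "\<forall>j<Suc k. M *\<^sub>v (e(k := x)) j = (\<kappa>(k := \<mu>)) j \<cdot>\<^sub>v (e(k := x)) j"
      using eig x by (auto simp: less_Suc_eq)
    ultimately show ?case by blast
  qed
  then show ?thesis by blast
qed

lemma eigenbasis_diagonalizes:
  fixes M :: "real mat"
  assumes M: "M \<in> carrier_mat n n" and e: "orthonormal_on n {..<n} e"
    and eig: "\<And>j. j < n \<Longrightarrow> M *\<^sub>v e j = \<kappa> j \<cdot>\<^sub>v e j"
  shows "M = mat_of_col_fun n n e * rect_diag n n \<kappa> * transpose_mat (mat_of_col_fun n n e)"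
proof -
  define E where "E = mat_of_col_fun n n e"
  note E = orth_matD[OF orth_mat_of_orthonormal[OF e], folded E_def]
  have ME: "M * E = E * rect_diag n n \<kappa>"
  proof (rule eq_matI)
    fix i j assume "i < dim_row (E * rect_diag n n \<kappa>)" "j < dim_col (E * rect_diag n n \<kappa>)"
    then have ij: "i < n" "j < n" using E(1) by auto
    have "(M * E) $$ (i, j) = (M *\<^sub>v e j) $ i"
      using ij M orthonormal_onD(1)[OF e] unfolding E_def by simp
    moreover have "(E * rect_diag n n \<kappa>) $$ (i, j) = E $$ (i, j) * \<kappa> j"
      using ij E(1) by (subst mult_rect_diag_index) auto
    ultimately show "(M * E) $$ (i, j) = (E * rect_diag n n \<kappa>) $$ (i, j)"
      using ij eig[OF ij(2)] orthonormal_onD(1)[OF e, of j] unfolding E_def by simp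
  qed (use M in \<open>auto simp: E_def\<close>)
  have "M = M * (E * transpose_mat E)" using M E by simp
  also have "\<dots> = E * rect_diag n n \<kappa> * transpose_mat E"
    using M E by (simp flip: ME assoc_mult_mat[of M n n E n "transpose_mat E" n])
  finally show ?thesis unfolding E_def .
qed

lemma char_poly_eigenbasis:
  fixes M :: "real mat"
  assumes M: "M \<in> carrier_mat n n" and e: "orthonormal_on n {..<n} e"
    and eig: "\<And>j. j < n \<Longrightarrow> M *\<^sub>v e j = \<kappa> j \<cdot>\<^sub>v e j"
  shows "char_poly M = (\<Prod>j\<leftarrow>[0..<n]. [:- \<kappa> j, 1:])"
proof -
  have "similar_mat M (rect_diag n n \<kappa>)"
    using eigenbasis_diagonalizes[OF assms] orth_matD[OF orth_mat_of_orthonormal[OF e]] M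
    by (intro similar_matI[of _ _ _ _ n]) auto
  then have "char_poly M = char_poly (rect_diag n n \<kappa>)" by (rule char_poly_similar)
  also have "\<dots> = (\<Prod>a\<leftarrow>diag_mat (rect_diag n n \<kappa>). [:- a, 1:])"
    by (rule char_poly_upper_triangular[of _ n]) (auto simp: upper_triangular_def)
  also have "diag_mat (rect_diag n n \<kappa>) = map \<kappa> [0..<n]" by (simp add: diag_mat_def)
  finally show ?thesis by (simp add: o_def)
qed

lemma order_char_poly_eigenbasis:
  fixes M :: "real mat"
  assumes M: "M \<in> carrier_mat n n" and e: "orthonormal_on n {..<n} e"
    and eig: "\<And>j. j < n \<Longrightarrow> M *\<^sub>v e j = \<kappa> j \<cdot>\<^sub>v e j"
  shows "order c (char_poly M) = card {j. j < n \<and> \<kappa> j = c}"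
proof -
  have "order c (char_poly M) = order c (\<Prod>j\<leftarrow>[0..<n]. [:- \<kappa> j, 1:])"
    by (simp only: char_poly_eigenbasis[OF assms])
  also have "\<dots> = (\<Sum>j\<leftarrow>[0..<n]. if \<kappa> j = c then 1 else 0)"
    by (subst order_prod_list) (auto simp: o_def order_linear')
  also have "\<dots> = card {j. j < n \<and> \<kappa> j = c}"
    by (simp add: sum.If_cases atLeast0LessThan lessThan_def Collect_conj_eq Int_commute
        flip: sum_set_upt_conv_sum_list_nat)
  finally show ?thesis .
qed

lemma count_mset_map_upt: "count (mset (map f [0..<n])) c = card {j. j < n \<and> f j = c}"
proof (induction n)
  case (Suc n)
  have "{j. j < Suc n \<and> f j = c} = {j. j < n \<and> f j = c} \<union> (if f n = c then {n} else {})"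
    by (auto simp: less_Suc_eq)
  then show ?case using Suc by (simp add: card_insert_if)
qed simp

lemma eigenbasis_reorder:
  fixes M :: "real mat"
  assumes e: "orthonormal_on n {..<n} e" and eig: "\<And>j. j < n \<Longrightarrow> M *\<^sub>v e j = \<kappa> j \<cdot>\<^sub>v e j"
    and same_mult: "\<And>c. card {j. j < n \<and> \<kappa> j = c} = card {j. j < n \<and> \<delta> j = c}"
  shows "\<exists>u. orthonormal_on n {..<n} u \<and> (\<forall>j<n. M *\<^sub>v u j = \<delta> j \<cdot>\<^sub>v u j)"
proof -
  have "mset (map \<delta> [0..<n]) = mset (map \<kappa> [0..<n])"
    by (intro multiset_eqI) (simp only: count_mset_map_upt same_mult)
  then obtain p where p: "p permutes {..<n}" and perm: "permute_list p (map \<kappa> [0..<n]) = map \<delta> [0..<n]"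
    by (rule mset_eq_permutation) simp
  have p_less: "p j < n" if "j < n" for j using permutes_in_image[OF p] that by simp
  have "\<kappa> (p j) = \<delta> j" if "j < n" for j
    using arg_cong[OF perm, of "\<lambda>xs. xs ! j"] that p_less[OF that] by (simp add: permute_list_def)
  moreover have "orthonormal_on n {..<n} (e \<circ> p)"
    using e p_less permutes_inj[OF p] unfolding orthonormal_on_def by (auto dest: injD)
  ultimately show ?thesis using eig p_less by (intro exI[of _ "e \<circ> p"]) auto
qed

section \<open>Matrices with a common Gram matrix\<close>

lemma factorization_from_columns:
  fixes X :: "real mat"
  assumes X: "X \<in> carrier_mat m n" and u: "orthonormal_on m {..<m} u" and W: "orth_mat n W"
    and cols: "\<And>k. k < n \<Longrightarrow> X *\<^sub>v col W k = (if k < m then d k \<cdot>\<^sub>v u k else 0\<^sub>v m)"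
  shows "X = mat_of_col_fun m m u * rect_diag m n d * transpose_mat W"
proof -
  let ?U = "mat_of_col_fun m m u"
  note Wc = orth_matD[OF W]
  have XW: "X * W = ?U * rect_diag m n d"
  proof (rule eq_matI)
    fix i k assume "i < dim_row (?U * rect_diag m n d)" "k < dim_col (?U * rect_diag m n d)"
    then have ik: "i < m" "k < n" by auto
    have "(X * W) $$ (i, k) = (X *\<^sub>v col W k) $ i" using ik X Wc(1) by simp
    moreover have "(?U * rect_diag m n d) $$ (i, k) = (if k < m then u k $ i * d k else 0)"
      using ik by (subst mult_rect_diag_index) auto
    ultimately show "(X * W) $$ (i, k) = (?U * rect_diag m n d) $$ (i, k)"
      using cols[OF ik(2)] ik orthonormal_onD(1)[OF u, of k] by auto
  qed (use X Wc in auto)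
  have "X = X * (W * transpose_mat W)" using X Wc by simp
  also have "\<dots> = ?U * rect_diag m n d * transpose_mat W"
    using X Wc by (simp flip: XW assoc_mult_mat[of X m n W n _ n])
  finally show ?thesis .
qed

lemma gram_eq_rect_diag_factorization:
  fixes Y W :: "real mat"
  assumes Y: "Y \<in> carrier_mat m n" and W: "orth_mat n W"
    and gram: "transpose_mat Y * Y =
      W * (transpose_mat (rect_diag m n d) * rect_diag m n d) * transpose_mat W"
  shows "\<exists>U. orth_mat m U \<and> Y = U * rect_diag m n d * transpose_mat W"
proof -
  note Wc = orth_matD[OF W]
  define y where "y k = Y *\<^sub>v col W k" for k
  have y: "y k \<in> carrier_vec m" for k unfolding y_def using Y by (intro carrier_vecI) simp
  have "transpose_mat (Y * W) * (Y * W) = transpose_mat W * (transpose_mat Y * (Y * W))"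
    using Y Wc by (simp add: transpose_mult[OF Y Wc(1)] assoc_mult_mat[of _ n n _ m _ n])
  also have "transpose_mat Y * (Y * W) = transpose_mat Y * Y * W"
    using Y Wc by (intro assoc_mult_mat[symmetric]) auto
  also have "transpose_mat W * (transpose_mat Y * Y * W) = transpose_mat W * (transpose_mat Y * Y) * W"
    using Y Wc by (intro assoc_mult_mat[symmetric]) auto
  also have "\<dots> = rect_diag n n (\<lambda>j. if j < m then d j * d j else 0)"
    unfolding gram by (subst orth_mat_conj_cancel[OF W]) (auto simp: rect_diag_mult_rect_diag)
  finally have YW:
    "transpose_mat (Y * W) * (Y * W) = rect_diag n n (\<lambda>j. if j < m then d j * d j else 0)" .
  have y_prod: "y j \<bullet> y k = (if j = k \<and> k < m then d k * d k else 0)" if jk: "j < n" "k < n" for j k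
    using arg_cong[OF YW, of "\<lambda>X. X $$ (j, k)"] jk Y Wc(1) col_mult2[OF Y Wc(1)] unfolding y_def by auto
  define J where "J = {k. k < n \<and> k < m \<and> d k \<noteq> 0}"
  have "orthonormal_on m J (\<lambda>k. (1 / d k) \<cdot>\<^sub>v y k)"
    using y y_prod unfolding orthonormal_on_def J_def
    by (auto simp: smult_scalar_prod_distrib[of _ m] scalar_prod_smult_distrib[of _ m])
  then obtain u where u: "orthonormal_on m {..<m} u" and uJ: "\<And>k. k \<in> J \<Longrightarrow> u k = (1 / d k) \<cdot>\<^sub>v y k"
    using orthonormal_extend[of J m] unfolding J_def by blast
  have "Y *\<^sub>v col W k = (if k < m then d k \<cdot>\<^sub>v u k else 0\<^sub>v m)" if k: "k < n" for k
  proof (cases "k \<in> J")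
    case True
    then show ?thesis using uJ[OF True] y unfolding y_def J_def by (auto simp: smult_smult_assoc)
  next
    case False
    then have "y k \<bullet> y k = 0" using y_prod[OF k k] k unfolding J_def by auto
    then have "y k = 0\<^sub>v m" using scalar_prod_self_eq_0_iff[OF y] by simp
    then show ?thesis using False k orthonormal_onD(1)[OF u, of k] unfolding y_def J_def by auto
  qed
  then have "Y = mat_of_col_fun m m u * rect_diag m n d * transpose_mat W"
    by (rule factorization_from_columns[OF Y u W])
  then show ?thesis using orth_mat_of_orthonormal[OF u] by blast
qed

section \<open>Block-diagonal matrices\<close>

lemma block_start_Suc [simp]: "block_start mu (Suc i) = block_start mu i + mu i"
  unfolding block_start_def by simp

lemma block_start_0 [simp]: "block_start mu 0 = 0"
  unfolding block_start_def by simp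

lemma block_start_mono: "i \<le> j \<Longrightarrow> block_start mu i \<le> block_start mu j"
  unfolding block_start_def by (rule sum_mono2) auto

lemma block_start_add_le: "i < l \<Longrightarrow> block_start mu i + mu i \<le> block_start mu l"
  using block_start_mono[of "Suc i" l mu] by simp

definition block_index :: "nat \<Rightarrow> (nat \<Rightarrow> nat) \<Rightarrow> nat \<Rightarrow> nat" where
  "block_index l mu j = (THE i. i < l \<and> block_start mu i \<le> j \<and> j < block_start mu i + mu i)"

lemma diag_entry_block_index: "diag_entry l \<sigma> mu j = \<sigma> (block_index l mu j)"
  unfolding diag_entry_def block_index_def ..

lemma block_index_eqI:
  assumes "i < l" "block_start mu i \<le> j" "j < block_start mu i + mu i"
  shows "block_index l mu j = i"
  unfolding block_index_def
proof (rule the_equality)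
  fix i' assume i': "i' < l \<and> block_start mu i' \<le> j \<and> j < block_start mu i' + mu i'"
  show "i' = i"
  proof (rule ccontr)
    assume "i' \<noteq> i"
    then consider "i' < i" | "i < i'" by linarith
    then show False
    proof cases
      case 1
      then show False using block_start_add_le[of i' i mu] assms i' by linarith
    next
      case 2
      then show False using block_start_add_le[of i i' mu] assms i' by linarith
    qed
  qed
qed (use assms in simp)

lemma block_index_bounds:
  assumes "j < block_start mu l"
  shows "block_index l mu j < l" "block_start mu (block_index l mu j) \<le> j"
    "j < block_start mu (block_index l mu j) + mu (block_index l mu j)"
proof -
  have "\<exists>i<l. block_start mu i \<le> j \<and> j < block_start mu i + mu i"
    using assms
  proof (induction l)
    case (Suc l)
    then show ?case by (cases "j < block_start mu l") (auto intro: less_SucI)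
  qed simp
  then obtain i where "i < l" "block_start mu i \<le> j" "j < block_start mu i + mu i" by blast
  with block_index_eqI[OF this] show "block_index l mu j < l" "block_start mu (block_index l mu j) \<le> j"
    "j < block_start mu (block_index l mu j) + mu (block_index l mu j)" by simp_all
qed

lemma block_index_eq_iff:
  assumes "i < l" "j < block_start mu l"
  shows "block_index l mu j = i \<longleftrightarrow> block_start mu i \<le> j \<and> j < block_start mu i + mu i"
  using block_index_eqI[OF assms(1)] block_index_bounds[OF assms(2)] by auto

lemma card_block:
  assumes i: "i < l"
  shows "card {j. j < block_start mu l \<and> block_index l mu j = i} = mu i"
proof -
  let ?B = "{block_start mu i ..< block_start mu i + mu i}"
  have "j < block_start mu l \<and> block_index l mu j = i \<longleftrightarrow> j \<in> ?B" for j
  proof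
    show "j \<in> ?B" if "j < block_start mu l \<and> block_index l mu j = i"
      using that block_index_eq_iff[OF i, of j mu] by simp
    show "j < block_start mu l \<and> block_index l mu j = i" if "j \<in> ?B"
      using that block_index_eqI[OF i, of mu j] block_start_add_le[OF i, of mu] by simp
  qed
  then have "{j. j < block_start mu l \<and> block_index l mu j = i} = ?B" by blast
  then show ?thesis by simp
qed

lemma sum_list_map_upt_block_start:
  "(\<And>i. i < l \<Longrightarrow> f i = mu i) \<Longrightarrow> sum_list (map f [0..<l]) = block_start mu l"
  unfolding block_start_def by (simp add: sum_list_distinct_conv_sum_set atLeast0LessThan)

lemma diag_block_mat_carrier:
  assumes W: "\<And>i. i < l \<Longrightarrow> W i \<in> carrier_mat (mu i) (mu i)"
  shows "diag_block_mat (map W [0..<l]) \<in> carrier_mat (block_start mu l) (block_start mu l)"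
proof -
  have "dim_row (W i) = mu i \<and> dim_col (W i) = mu i" if "i < l" for i
    using W[OF that] by simp
  then have "sum_list (map (dim_row \<circ> W) [0..<l]) = block_start mu l"
    "sum_list (map (dim_col \<circ> W) [0..<l]) = block_start mu l"
    by (simp_all add: sum_list_map_upt_block_start)
  then show ?thesis by (intro carrier_matI) (simp_all only: dim_diag_block_mat map_map)
qed

lemma index_diag_block_mat:
  assumes W: "\<And>i. i < l \<Longrightarrow> W i \<in> carrier_mat (mu i) (mu i)"
    and i: "i < l" and a: "block_start mu i \<le> a" "a < block_start mu i + mu i"
    and b: "b < block_start mu l"
  shows "diag_block_mat (map W [0..<l]) $$ (a, b) =
    (if block_start mu i \<le> b \<and> b < block_start mu i + mu i
     then W i $$ (a - block_start mu i, b - block_start mu i) else 0)"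
  using W i a b
proof (induction l arbitrary: i)
  case (Suc l)
  let ?D = "diag_block_mat (map W [0..<l])"
  have D: "?D \<in> carrier_mat (block_start mu l) (block_start mu l)"
    using Suc.prems(1) by (intro diag_block_mat_carrier) simp
  have Wl: "W l \<in> carrier_mat (mu l) (mu l)" using Suc.prems(1) by simp
  have split: "diag_block_mat (map W [0..<Suc l]) =
      four_block_mat ?D (0\<^sub>m (block_start mu l) (mu l)) (0\<^sub>m (mu l) (block_start mu l)) (W l)"
    using D Wl by (simp add: diag_block_mat_last)
  show ?case
  proof (cases "i < l")
    case True
    have "a < block_start mu l" using Suc.prems(4) block_start_add_le[OF True, of mu] by simp
    show ?thesis
    proof (cases "b < block_start mu l")
      case True
      then show ?thesis
        using Suc.IH[OF _ \<open>i < l\<close> Suc.prems(3,4)] Suc.prems(1) \<open>a < block_start mu l\<close> D Wl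
        unfolding split by simp
    next
      case False
      then show ?thesis
        using \<open>a < block_start mu l\<close> block_start_add_le[OF \<open>i < l\<close>, of mu] Suc.prems(5) D Wl
        unfolding split by simp
    qed
  next
    case False
    then have "i = l" using Suc.prems(2) by simp
    then show ?thesis using Suc.prems(3-5) D Wl unfolding split by auto
  qed
qed simp

lemma index_diag_block_mat_off_block:
  assumes W: "\<And>i. i < l \<Longrightarrow> W i \<in> carrier_mat (mu i) (mu i)"
    and ab: "a < block_start mu l" "b < block_start mu l" "block_index l mu a \<noteq> block_index l mu b"
  shows "diag_block_mat (map W [0..<l]) $$ (a, b) = 0"
  using index_diag_block_mat[OF W block_index_bounds[OF ab(1)] ab(2)] ab
    block_index_eq_iff[OF block_index_bounds(1)[OF ab(1)] ab(2)] by auto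

definition diag_block :: "'a mat \<Rightarrow> (nat \<Rightarrow> nat) \<Rightarrow> nat \<Rightarrow> 'a mat" where
  "diag_block D mu i = mat (mu i) (mu i) (\<lambda>(x, y). D $$ (block_start mu i + x, block_start mu i + y))"

lemma block_diagonal_eq_diag_block_mat:
  assumes D: "D \<in> carrier_mat (block_start mu l) (block_start mu l)"
    and off_block: "\<And>a b. a < block_start mu l \<Longrightarrow> b < block_start mu l \<Longrightarrow>
      block_index l mu a \<noteq> block_index l mu b \<Longrightarrow> D $$ (a, b) = 0"
  shows "D = diag_block_mat (map (diag_block D mu) [0..<l])"
proof -
  have W: "diag_block D mu i \<in> carrier_mat (mu i) (mu i)" for i unfolding diag_block_def by simp
  note carrier = diag_block_mat_carrier[of l "diag_block D mu" mu, OF W]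
  show ?thesis
  proof (rule eq_matI)
    fix a b
    assume "a < dim_row (diag_block_mat (map (diag_block D mu) [0..<l]))"
      "b < dim_col (diag_block_mat (map (diag_block D mu) [0..<l]))"
    then have ab: "a < block_start mu l" "b < block_start mu l" using carrier by auto
    note a = block_index_bounds[OF ab(1)]
    show "D $$ (a, b) = diag_block_mat (map (diag_block D mu) [0..<l]) $$ (a, b)"
      unfolding index_diag_block_mat[OF W a ab(2)]
      using off_block[OF ab] block_index_eq_iff[OF a(1) ab(2)] a by (auto simp: diag_block_def)
  qed (use D carrier in auto)
qed

lemma orth_mat_diag_block_mat_block:
  fixes W :: "nat \<Rightarrow> real mat"
  assumes W: "\<And>i. i < l \<Longrightarrow> W i \<in> carrier_mat (mu i) (mu i)"
    and orth: "orth_mat (block_start mu l) (diag_block_mat (map W [0..<l]))" and i: "i < l"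
  shows "orth_mat (mu i) (W i)"
proof -
  let ?D = "diag_block_mat (map W [0..<l])" and ?s = "block_start mu i"
  note D = orth_matD[OF orth]
  have le: "?s + mu i \<le> block_start mu l" using block_start_add_le[OF i] .
  have D_block: "?D $$ (?s + x, c) = (if ?s \<le> c \<and> c < ?s + mu i then W i $$ (x, c - ?s) else 0)"
    if "x < mu i" "c < block_start mu l" for x c
    using index_diag_block_mat[OF W i, where a = "?s + x" and b = c] that by simp
  have WW: "W i * transpose_mat (W i) = 1\<^sub>m (mu i)"
  proof (rule eq_matI)
    fix x y assume "x < dim_row (1\<^sub>m (mu i))" "y < dim_col (1\<^sub>m (mu i))"
    then have xy: "x < mu i" "y < mu i" by auto
    let ?f = "\<lambda>c. ?D $$ (?s + x, c) * ?D $$ (?s + y, c)"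
    have "(W i * transpose_mat (W i)) $$ (x, y) = (\<Sum>z = 0..<mu i. ?f (?s + z))"
      using xy W[OF i] le D_block by (auto simp: scalar_prod_def intro!: sum.cong)
    also have "\<dots> = (\<Sum>c = ?s..<?s + mu i. ?f c)"
      using sum.shift_bounds_nat_ivl[of ?f 0 ?s "mu i"] by (simp add: add.commute)
    also have "\<dots> = (\<Sum>c = 0..<block_start mu l. ?f c)"
      by (rule sum.mono_neutral_left) (use le D_block xy in auto)
    also have "\<dots> = (?D * transpose_mat ?D) $$ (?s + x, ?s + y)"
      using D(1) le xy by (simp add: scalar_prod_def)
    also have "\<dots> = 1\<^sub>m (mu i) $$ (x, y)" using D(2) le xy by simp
    finally show "(W i * transpose_mat (W i)) $$ (x, y) = 1\<^sub>m (mu i) $$ (x, y)" .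
  qed (use W[OF i] in auto)
  moreover from mat_mult_left_right_inverse[OF W[OF i] _ WW]
  have "transpose_mat (W i) * W i = 1\<^sub>m (mu i)" using W[OF i] by auto
  ultimately show ?thesis using W[OF i] unfolding orth_mat_def by auto
qed

section \<open>Singular value decompositions\<close>

lemma singular_values_nonneg:
  "\<sigma> ` {..<l} = {s. singular_value A s} \<Longrightarrow> i < l \<Longrightarrow> 0 \<le> \<sigma> i"
  unfolding singular_value_def by auto

lemma gram_eigenvalue_singular_value:
  fixes A :: "real mat"
  assumes A: "A \<in> carrier_mat m n" and all_sv: "\<sigma> ` {..<l} = {s. singular_value A s}"
    and x: "x \<in> carrier_vec m" "x \<bullet> x = 1" and eig: "A * transpose_mat A *\<^sub>v x = \<kappa> \<cdot>\<^sub>v x"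
  shows "\<exists>i<l. \<kappa> = (\<sigma> i)\<^sup>2"
proof -
  have "\<kappa> = x \<bullet> (A *\<^sub>v (transpose_mat A *\<^sub>v x))" using eig x A by simp
  also have "\<dots> = (transpose_mat A *\<^sub>v x) \<bullet> (transpose_mat A *\<^sub>v x)"
    using transpose_vec_mult_scalar[OF A _ x(1), of "transpose_mat A *\<^sub>v x"] A x by simp
  finally have "0 \<le> \<kappa>" using scalar_prod_self_nonneg by simp
  moreover have "eigenvalue (A * transpose_mat A) \<kappa>"
    using x eig A unfolding eigenvalue_def eigenvector_def by (auto simp: scalar_prod_right_zero[of x m])
  ultimately have "singular_value A (sqrt \<kappa>)" unfolding singular_value_def by simp
  then obtain i where "i < l" "\<sigma> i = sqrt \<kappa>" using all_sv by (metis imageE lessThan_iff mem_Collect_eq)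
  then show ?thesis using \<open>0 \<le> \<kappa>\<close> by auto
qed

lemma diag_entry_sq_eq_iff:
  fixes \<sigma> :: "nat \<Rightarrow> real"
  assumes inj: "inj_on \<sigma> {..<l}" and nonneg: "\<And>i. i < l \<Longrightarrow> 0 \<le> \<sigma> i"
    and ab: "a < block_start mu l" "b < block_start mu l"
  shows "diag_entry l \<sigma> mu a * diag_entry l \<sigma> mu a = diag_entry l \<sigma> mu b * diag_entry l \<sigma> mu b
    \<longleftrightarrow> block_index l mu a = block_index l mu b"
  using block_index_bounds(1)[OF ab(1)] block_index_bounds(1)[OF ab(2)] nonneg inj
  unfolding diag_entry_block_index by (auto simp flip: power2_eq_square dest: inj_onD)

lemma gram_eigenvalue_multiplicities:
  fixes A :: "real mat"
  assumes A: "A \<in> carrier_mat m n" and e: "orthonormal_on m {..<m} e"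
    and eig: "\<And>j. j < m \<Longrightarrow> A * transpose_mat A *\<^sub>v e j = \<kappa> j \<cdot>\<^sub>v e j"
    and distinct: "inj_on \<sigma> {..<l}" and all_sv: "\<sigma> ` {..<l} = {s. singular_value A s}"
    and mu: "\<And>i. i < l \<Longrightarrow> mu i = sv_mult A (\<sigma> i)"
  shows "block_start mu l = m"
    and "card {j. j < m \<and> \<kappa> j = c} = card {j. j < m \<and> diag_entry l \<sigma> mu j * diag_entry l \<sigma> mu j = c}"
proof -
  have P: "A * transpose_mat A \<in> carrier_mat m m" using A by simp
  have sq_inj: "i = i'" if "i < l" "i' < l" "(\<sigma> i)\<^sup>2 = (\<sigma> i')\<^sup>2" for i i'
    using that singular_values_nonneg[OF all_sv] distinct by (auto dest: inj_onD)
  have \<kappa>_sv: "\<exists>i<l. \<kappa> j = (\<sigma> i)\<^sup>2" if "j < m" for j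
    using gram_eigenvalue_singular_value[OF A all_sv orthonormal_onD(1)[OF e] _ eig[OF that]]
      orthonormal_onD(2)[OF e, of j j] that by simp
  have mu_card: "mu i = card {j. j < m \<and> \<kappa> j = (\<sigma> i)\<^sup>2}" if "i < l" for i
    using mu[OF that] order_char_poly_eigenbasis[OF P e eig] unfolding sv_mult_def by simp
  show blocks: "block_start mu l = m"
  proof -
    have "block_start mu l = (\<Sum>i<l. card {j. j < m \<and> \<kappa> j = (\<sigma> i)\<^sup>2})"
      unfolding block_start_def using mu_card by simp
    also have "\<dots> = card (\<Union>i<l. {j. j < m \<and> \<kappa> j = (\<sigma> i)\<^sup>2})"
      by (rule card_UN_disjoint[symmetric]) (auto dest: sq_inj)
    also have "(\<Union>i<l. {j. j < m \<and> \<kappa> j = (\<sigma> i)\<^sup>2}) = {..<m}" using \<kappa>_sv by auto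
    finally show ?thesis by simp
  qed
  let ?d = "diag_entry l \<sigma> mu"
  show "card {j. j < m \<and> \<kappa> j = c} = card {j. j < m \<and> ?d j * ?d j = c}"
  proof (cases "\<exists>i<l. c = (\<sigma> i)\<^sup>2")
    case True
    then obtain i where i: "i < l" "c = (\<sigma> i)\<^sup>2" by blast
    have "{j. j < m \<and> ?d j * ?d j = c} = {j. j < block_start mu l \<and> block_index l mu j = i}"
      using i blocks block_index_bounds(1)[of _ mu l] sq_inj
      unfolding diag_entry_block_index by (auto simp flip: power2_eq_square)
    then show ?thesis using card_block[OF i(1)] mu_card[OF i(1)] i(2) by simp
  next
    case False
    then have "{j. j < m \<and> \<kappa> j = c} = {}" "{j. j < m \<and> ?d j * ?d j = c} = {}"
      using \<kappa>_sv blocks block_index_bounds(1)[of _ mu l]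
      unfolding diag_entry_block_index by (auto simp flip: power2_eq_square)
    then show ?thesis by (simp only: card.empty)
  qed
qed

lemma ordered_svd:
  fixes A :: "real mat"
  assumes A: "A \<in> carrier_mat m n" and distinct: "inj_on \<sigma> {..<l}"
    and all_sv: "\<sigma> ` {..<l} = {s. singular_value A s}"
    and mu: "\<And>i. i < l \<Longrightarrow> mu i = sv_mult A (\<sigma> i)"
    and fits: "\<And>j. n \<le> j \<Longrightarrow> j < m \<Longrightarrow> diag_entry l \<sigma> mu j = 0"
  shows "block_start mu l = m"
    and "\<exists>U V. orth_mat m U \<and> orth_mat n V \<and>
      A = U * rect_diag m n (diag_entry l \<sigma> mu) * transpose_mat V"
proof -
  define d where "d = diag_entry l \<sigma> mu"
  have P: "A * transpose_mat A \<in> carrier_mat m m"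
    "transpose_mat (A * transpose_mat A) = A * transpose_mat A"
    using A by (auto simp: transpose_mult[OF A])
  obtain e \<kappa> where e: "orthonormal_on m {..<m} e"
    and eig: "\<And>j. j < m \<Longrightarrow> A * transpose_mat A *\<^sub>v e j = \<kappa> j \<cdot>\<^sub>v e j"
    using sym_mat_orthonormal_eigenbasis[OF P] by blast
  show "block_start mu l = m" by (rule gram_eigenvalue_multiplicities(1)[OF A e eig distinct all_sv mu])
  obtain u where u: "orthonormal_on m {..<m} u"
    and eig_u: "\<And>j. j < m \<Longrightarrow> A * transpose_mat A *\<^sub>v u j = (d j * d j) \<cdot>\<^sub>v u j"
    using eigenbasis_reorder[OF e eig gram_eigenvalue_multiplicities(2)[OF A e eig distinct all_sv mu]]
    unfolding d_def by blast
  define U where "U = mat_of_col_fun m m u"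
  have U: "orth_mat m U" unfolding U_def by (rule orth_mat_of_orthonormal[OF u])
  have "transpose_mat (transpose_mat A) * transpose_mat A =
      U * rect_diag m m (\<lambda>j. d j * d j) * transpose_mat U"
    using eigenbasis_diagonalizes[OF P(1) u eig_u] unfolding U_def by simp
  also have "rect_diag m m (\<lambda>j. d j * d j) = transpose_mat (rect_diag n m d) * rect_diag n m d"
    using rect_diag_mult_transpose[of n m d] fits unfolding d_def by simp
  finally have "transpose_mat (transpose_mat A) * transpose_mat A =
      U * (transpose_mat (rect_diag n m d) * rect_diag n m d) * transpose_mat U" .
  moreover have "transpose_mat A \<in> carrier_mat n m" using A by simp
  ultimately obtain V where V: "orth_mat n V"
    and AT: "transpose_mat A = V * rect_diag n m d * transpose_mat U"
    using gram_eq_rect_diag_factorization[OF _ U] by blast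
  have "A = transpose_mat (V * rect_diag n m d * transpose_mat U)" by (simp flip: AT)
  also have "\<dots> = U * rect_diag m n d * transpose_mat V"
    using transpose_three_factors[OF orth_matD(1)[OF V] rect_diag_carrier(1) orth_matD(1)[OF U]] by simp
  finally show "\<exists>U V. orth_mat m U \<and> orth_mat n V \<and>
      A = U * rect_diag m n (diag_entry l \<sigma> mu) * transpose_mat V"
    using U V unfolding d_def by blast
qed

lemma gram_eq_imp_common_svd:
  fixes A B :: "real mat"
  assumes A: "A \<in> carrier_mat m n" and B: "B \<in> carrier_mat m n"
    and distinct: "inj_on \<sigma> {..<l}" and all_sv: "\<sigma> ` {..<l} = {s. singular_value A s}"
    and mu: "\<And>i. i < l \<Longrightarrow> mu i = sv_mult A (\<sigma> i)"
    and fits: "\<And>j. n \<le> j \<Longrightarrow> j < m \<Longrightarrow> diag_entry l \<sigma> mu j = 0"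
    and left: "A * transpose_mat A = B * transpose_mat B"
    and right: "transpose_mat A * A = transpose_mat B * B"
  shows "\<exists>U1 U2 V W. orth_mat m U1 \<and> orth_mat m U2 \<and> orth_mat n V \<and>
    A = U1 * rect_diag m n (diag_entry l \<sigma> mu) * transpose_mat V \<and>
    B = U2 * rect_diag m n (diag_entry l \<sigma> mu) * transpose_mat V \<and>
    (\<forall>i<l. orth_mat (mu i) (W i)) \<and> U1 = U2 * diag_block_mat (map W [0..<l])"
proof -
  define d where "d = diag_entry l \<sigma> mu"
  define S where "S = rect_diag m n d"
  define \<Lambda> where "\<Lambda> = rect_diag m m (\<lambda>j. d j * d j)"
  have blocks: "block_start mu l = m" by (rule ordered_svd(1)[OF A distinct all_sv mu fits])
  obtain U1 V where U1: "orth_mat m U1" and V: "orth_mat n V" and decA: "A = U1 * S * transpose_mat V"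
    using ordered_svd(2)[OF A distinct all_sv mu fits] unfolding S_def d_def by blast
  have S: "S \<in> carrier_mat m n" and SS: "S * transpose_mat S = \<Lambda>"
    unfolding S_def \<Lambda>_def d_def using rect_diag_mult_transpose[OF fits] by simp_all
  have "transpose_mat B * B = V * (transpose_mat S * S) * transpose_mat V"
    using orth_factorization_transpose_mult[OF U1 S orth_matD(1)[OF V]] right decA by simp
  then obtain U2 where U2: "orth_mat m U2" and decB: "B = U2 * S * transpose_mat V"
    using gram_eq_rect_diag_factorization[OF B V] unfolding S_def by blast
  define D where "D = transpose_mat U2 * U1"
  have D: "orth_mat m D" unfolding D_def by (rule orth_mat_mult[OF orth_mat_transpose[OF U2] U1])
  have U1_eq: "U1 = U2 * D"
    using orth_mat_cancel_left(2)[OF U2 orth_matD(1)[OF U1]] unfolding D_def by simp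
  have \<Lambda>: "\<Lambda> \<in> carrier_mat m m" unfolding \<Lambda>_def by simp
  have "U2 * (D * \<Lambda> * transpose_mat D) * transpose_mat U2 = U1 * \<Lambda> * transpose_mat U1"
    using orth_mat_conj_mult[OF orth_matD(1)[OF U2] orth_matD(1)[OF D] \<Lambda>] U1_eq by simp
  also have "\<dots> = U2 * \<Lambda> * transpose_mat U2"
    using orth_factorization_mult_transpose[OF orth_matD(1)[OF U1] S V]
      orth_factorization_mult_transpose[OF orth_matD(1)[OF U2] S V] left decA decB SS by simp
  finally have "D * \<Lambda> * transpose_mat D = \<Lambda>"
    using orth_mat_conj_eq_iff[OF U2 _ \<Lambda>, of "D * \<Lambda> * transpose_mat D"] orth_matD(1)[OF D] \<Lambda> by auto
  then have "D * \<Lambda> = \<Lambda> * D" using orth_mat_conj_eq_iff_commute[OF D \<Lambda>] by simp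
  then have off_block: "D $$ (a, b) = 0"
    if "a < block_start mu l" "b < block_start mu l" "block_index l mu a \<noteq> block_index l mu b" for a b
    using that commute_rect_diag_iff[OF orth_matD(1)[OF D]] blocks
      diag_entry_sq_eq_iff[OF distinct singular_values_nonneg[OF all_sv]]
    unfolding \<Lambda>_def d_def by auto
  define W where "W = diag_block D mu"
  have W: "W i \<in> carrier_mat (mu i) (mu i)" for i unfolding W_def diag_block_def by simp
  have D_blocks: "D = diag_block_mat (map W [0..<l])"
    unfolding W_def using orth_matD(1)[OF D] off_block blocks
    by (intro block_diagonal_eq_diag_block_mat) simp_all
  have "orth_mat (mu i) (W i)" if "i < l" for i
    using orth_mat_diag_block_mat_block[of l W mu, OF W _ that] D D_blocks blocks by simp
  then show ?thesis using U1 U2 V decA decB U1_eq D_blocks unfolding S_def d_def by blast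
qed

lemma common_svd_imp_gram_eq:
  fixes A B U1 U2 V :: "real mat" and W :: "nat \<Rightarrow> real mat" and \<sigma> :: "nat \<Rightarrow> real"
  assumes distinct: "inj_on \<sigma> {..<l}" and nonneg: "\<And>i. i < l \<Longrightarrow> 0 \<le> \<sigma> i"
    and fits: "\<And>j. n \<le> j \<Longrightarrow> j < m \<Longrightarrow> diag_entry l \<sigma> mu j = 0"
    and U1: "orth_mat m U1" and U2: "orth_mat m U2" and V: "orth_mat n V"
    and decA: "A = U1 * rect_diag m n (diag_entry l \<sigma> mu) * transpose_mat V"
    and decB: "B = U2 * rect_diag m n (diag_entry l \<sigma> mu) * transpose_mat V"
    and W: "\<forall>i<l. orth_mat (mu i) (W i)" and U1_eq: "U1 = U2 * diag_block_mat (map W [0..<l])"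
  shows "A * transpose_mat A = B * transpose_mat B \<and> transpose_mat A * A = transpose_mat B * B"
proof -
  define d where "d = diag_entry l \<sigma> mu"
  define S where "S = rect_diag m n d"
  define \<Lambda> where "\<Lambda> = rect_diag m m (\<lambda>j. d j * d j)"
  define D where "D = diag_block_mat (map W [0..<l])"
  have S: "S \<in> carrier_mat m n" and SS: "S * transpose_mat S = \<Lambda>" and \<Lambda>: "\<Lambda> \<in> carrier_mat m m"
    unfolding S_def \<Lambda>_def d_def using rect_diag_mult_transpose[OF fits] by simp_all
  have Wc: "W i \<in> carrier_mat (mu i) (mu i)" if "i < l" for i using W that orth_matD(1) by blast
  have Dc: "D \<in> carrier_mat (block_start mu l) (block_start mu l)"
    unfolding D_def by (rule diag_block_mat_carrier[OF Wc])
  have blocks: "block_start mu l = m" using U1_eq orth_matD(1)[OF U1] Dc unfolding D_def by auto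
  have "D = transpose_mat U2 * U1"
    using orth_mat_cancel_left(1)[OF U2, of D m] Dc blocks U1_eq unfolding D_def by simp
  then have D: "orth_mat m D" using orth_mat_mult[OF orth_mat_transpose[OF U2] U1] by simp
  have "D * \<Lambda> = \<Lambda> * D"
    unfolding \<Lambda>_def commute_rect_diag_iff[OF orth_matD(1)[OF D]]
    using index_diag_block_mat_off_block[OF Wc] diag_entry_sq_eq_iff[OF distinct nonneg] blocks
    unfolding D_def d_def by auto
  then have DLD: "D * \<Lambda> * transpose_mat D = \<Lambda>" using orth_mat_conj_eq_iff_commute[OF D \<Lambda>] by simp
  have "A * transpose_mat A = U1 * \<Lambda> * transpose_mat U1"
    using orth_factorization_mult_transpose[OF orth_matD(1)[OF U1] S V] decA SS
    unfolding S_def d_def by simp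
  also have "\<dots> = U2 * \<Lambda> * transpose_mat U2"
    using orth_mat_conj_mult[OF orth_matD(1)[OF U2] orth_matD(1)[OF D] \<Lambda>] DLD U1_eq
    unfolding D_def by simp
  also have "\<dots> = B * transpose_mat B"
    using orth_factorization_mult_transpose[OF orth_matD(1)[OF U2] S V] decB SS
    unfolding S_def d_def by simp
  finally show ?thesis
    using orth_factorization_transpose_mult[OF U1 S orth_matD(1)[OF V]]
      orth_factorization_transpose_mult[OF U2 S orth_matD(1)[OF V]] decA decB
    unfolding S_def d_def by simp
qed

theorem proposition3p1:
  fixes A B :: "real mat" and m n l :: nat and \<sigma> :: "nat \<Rightarrow> real" and mu :: "nat \<Rightarrow> nat"
  assumes A: "A \<in> carrier_mat m n" and B: "B \<in> carrier_mat m n"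
    and l: "l \<ge> 1"
    and distinct: "inj_on \<sigma> {..<l}"
    and all_sv: "\<sigma> ` {..<l} = {s. singular_value A s}"
    and mu: "\<And>i. i < l \<Longrightarrow> mu i = sv_mult A (\<sigma> i)"
    and fits: "\<And>j. n \<le> j \<Longrightarrow> j < m \<Longrightarrow> diag_entry l \<sigma> mu j = 0"
  shows "(A * transpose_mat A = B * transpose_mat B \<and> transpose_mat A * A = transpose_mat B * B)
     \<longleftrightarrow> (\<exists>U1 U2 V S W. orth_mat m U1 \<and> orth_mat m U2 \<and> orth_mat n V \<and>
            rect_diag_mat m n (diag_entry l \<sigma> mu) S \<and>
            A = U1 * S * transpose_mat V \<and> B = U2 * S * transpose_mat V \<and>
            (\<forall>i<l. orth_mat (mu i) (W i)) \<and>
            U1 = U2 * diag_block_mat (map W [0..<l]))"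
  unfolding rect_diag_mat_iff
  using gram_eq_imp_common_svd[OF A B distinct all_sv mu fits]
    common_svd_imp_gram_eq[OF distinct singular_values_nonneg[OF all_sv] fits]
  by blast

end
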